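(* Let $(M,g)$ be a Bianchi spacetime solving Einstein's equations $\mathrm{Ric}-\frac12Sg+\Lambda g=T$ with $\rho\geq0$ and $\Lambda\geq0$. Then for all $v\in\mathbb R^3$ and all $t\in I$ with $\theta(t)\neq0$, $$(2\delta^i_m-3\Sigma^i{}_m)a^{mj}v_iv_j\geq-\frac32\frac{\bar S_+}{\theta^2}a^{ij}v_iv_j,$$ where $\bar S_+=\max\{\bar S,0\}$.
   Context: A Bianchi spacetime is $M=G\times I$, $I=(t_-,t_+)$, with $G$ a connected 3-dimensional Lie group, $g=-dt\otimes dt+a_{ij}(t)\xi^i\otimes\xi^j$, $\{\xi^i\}$ dual to a basis $\{e_i\}$ of left invariant vector fields, $a(t)$ positive definite with inverse entries $a^{ij}$. $\bar k_{ij}=\frac12\dot a_{ij}$, $\theta=a^{ij}\bar k_{ij}$, $\bar\sigma_{ij}=\bar k_{ij}-\frac13\theta a_{ij}$, $\Sigma_{ij}=\bar\sigma_{ij}/\theta$, $\Sigma^i{}_m=a^{ij}\Sigma_{jm}$. $\rho=T_{00}$ in the frame $\partial_t,e_i$. $\bar S$ is the scalar curvature of $G\times\{t\}$ with the induced metric. Summation over repeated indices. *)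

theory Defs
  imports Complex_Main
begin

text \<open>Matrices are nat-indexed functions; only indices below n matter.\<close>

definition mat_inv :: "nat \<Rightarrow> (nat \<Rightarrow> nat \<Rightarrow> real) \<Rightarrow> nat \<Rightarrow> nat \<Rightarrow> real" where
  "mat_inv n A = (THE B. (\<forall>i<n. \<forall>k<n. (\<Sum>j<n. A i j * B j k) = (if i = k then 1 else 0))
                       \<and> (\<forall>i j. \<not> (i < n \<and> j < n) \<longrightarrow> B i j = 0))"

text \<open>Curvature of a metric expressed in a frame E_0..E_(n-1).
  g a b = g(E_a,E_b), gi = inverse matrix, dg c a b = E_c(g_ab),
  ddg d c a b = E_d(E_c(g_ab)), C e a b = structure functions (constants):
  [E_a,E_b] = sum_e C e a b E_e.
  Conventions: R(X,Y)Z = nabla_X nabla_Y Z - nabla_Y nabla_X Z - nabla_[X,Y] Z,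
  Ric(Y,Z) = trace (X -> R(X,Y)Z), S = trace of Ric.\<close>

definition frame_Gamma :: "nat \<Rightarrow> (nat \<Rightarrow> nat \<Rightarrow> real) \<Rightarrow> (nat \<Rightarrow> nat \<Rightarrow> nat \<Rightarrow> real)
    \<Rightarrow> (nat \<Rightarrow> nat \<Rightarrow> nat \<Rightarrow> real) \<Rightarrow> nat \<Rightarrow> nat \<Rightarrow> nat \<Rightarrow> real" where
  \<comment> \<open>g(nabla_{E_a} E_b, E_c), by the Koszul formula\<close>
  "frame_Gamma n g dg C a b c =
     (dg a b c + dg b a c - dg c a b
      + (\<Sum>e<n. C e a b * g e c) - (\<Sum>e<n. C e a c * g e b) - (\<Sum>e<n. C e b c * g e a)) / 2"

definition frame_dGamma :: "nat \<Rightarrow> (nat \<Rightarrow> nat \<Rightarrow> nat \<Rightarrow> real)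
    \<Rightarrow> (nat \<Rightarrow> nat \<Rightarrow> nat \<Rightarrow> nat \<Rightarrow> real) \<Rightarrow> (nat \<Rightarrow> nat \<Rightarrow> nat \<Rightarrow> real)
    \<Rightarrow> nat \<Rightarrow> nat \<Rightarrow> nat \<Rightarrow> nat \<Rightarrow> real" where
  \<comment> \<open>E_d applied to frame_Gamma a b c\<close>
  "frame_dGamma n dg ddg C d a b c =
     (ddg d a b c + ddg d b a c - ddg d c a b
      + (\<Sum>e<n. C e a b * dg d e c) - (\<Sum>e<n. C e a c * dg d e b) - (\<Sum>e<n. C e b c * dg d e a)) / 2"

definition frame_Riem :: "nat \<Rightarrow> (nat \<Rightarrow> nat \<Rightarrow> real) \<Rightarrow> (nat \<Rightarrow> nat \<Rightarrow> real)
    \<Rightarrow> (nat \<Rightarrow> nat \<Rightarrow> nat \<Rightarrow> real) \<Rightarrow> (nat \<Rightarrow> nat \<Rightarrow> nat \<Rightarrow> nat \<Rightarrow> real)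
    \<Rightarrow> (nat \<Rightarrow> nat \<Rightarrow> nat \<Rightarrow> real) \<Rightarrow> nat \<Rightarrow> nat \<Rightarrow> nat \<Rightarrow> nat \<Rightarrow> real" where
  \<comment> \<open>g(R(E_a,E_b)E_c, E_d)\<close>
  "frame_Riem n g gi dg ddg C a b c d =
     (let \<Gamma> = frame_Gamma n g dg C in
      frame_dGamma n dg ddg C a b c d - frame_dGamma n dg ddg C b a c d
      - (\<Sum>e<n. \<Sum>f<n. gi e f * (\<Gamma> b c e * \<Gamma> a d f - \<Gamma> a c e * \<Gamma> b d f))
      - (\<Sum>e<n. C e a b * \<Gamma> e c d))"

definition frame_Ric :: "nat \<Rightarrow> (nat \<Rightarrow> nat \<Rightarrow> real) \<Rightarrow> (nat \<Rightarrow> nat \<Rightarrow> real)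
    \<Rightarrow> (nat \<Rightarrow> nat \<Rightarrow> nat \<Rightarrow> real) \<Rightarrow> (nat \<Rightarrow> nat \<Rightarrow> nat \<Rightarrow> nat \<Rightarrow> real)
    \<Rightarrow> (nat \<Rightarrow> nat \<Rightarrow> nat \<Rightarrow> real) \<Rightarrow> nat \<Rightarrow> nat \<Rightarrow> real" where
  "frame_Ric n g gi dg ddg C b c =
     (\<Sum>a<n. \<Sum>d<n. gi a d * frame_Riem n g gi dg ddg C a b c d)"

definition frame_Scal :: "nat \<Rightarrow> (nat \<Rightarrow> nat \<Rightarrow> real) \<Rightarrow> (nat \<Rightarrow> nat \<Rightarrow> real)
    \<Rightarrow> (nat \<Rightarrow> nat \<Rightarrow> nat \<Rightarrow> real) \<Rightarrow> (nat \<Rightarrow> nat \<Rightarrow> nat \<Rightarrow> nat \<Rightarrow> real)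
    \<Rightarrow> (nat \<Rightarrow> nat \<Rightarrow> nat \<Rightarrow> real) \<Rightarrow> real" where
  "frame_Scal n g gi dg ddg C =
     (\<Sum>b<n. \<Sum>c<n. gi b c * frame_Ric n g gi dg ddg C b c)"

text \<open>Lie algebra of G given by structure constants gam k i j:
  [e_i,e_j] = sum_k gam k i j e_k, indices 0,1,2.\<close>

definition lie_structure_constants :: "(nat \<Rightarrow> nat \<Rightarrow> nat \<Rightarrow> real) \<Rightarrow> bool" where
  "lie_structure_constants gam \<longleftrightarrow>
     (\<forall>k<3. \<forall>i<3. \<forall>j<3. gam k i j = - gam k j i) \<and>
     (\<forall>i<3. \<forall>j<3. \<forall>k<3. \<forall>d<3.
        (\<Sum>e<3. gam e i j * gam d e k + gam e j k * gam d e i + gam e k i * gam d e j) = 0)"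

text \<open>Spacetime frame: index 0 is \<partial>_t, index i+1 is e_i.
  a, a', a'' : the spatial metric and its first two time derivatives.\<close>

definition st_g :: "(real \<Rightarrow> nat \<Rightarrow> nat \<Rightarrow> real) \<Rightarrow> real \<Rightarrow> nat \<Rightarrow> nat \<Rightarrow> real" where
  "st_g a t x y = (if x = 0 \<and> y = 0 then -1 else if x = 0 \<or> y = 0 then 0
                   else a t (x - 1) (y - 1))"

definition st_dg :: "(real \<Rightarrow> nat \<Rightarrow> nat \<Rightarrow> real) \<Rightarrow> real \<Rightarrow> nat \<Rightarrow> nat \<Rightarrow> nat \<Rightarrow> real" where
  "st_dg a' t c x y = (if c = 0 \<and> x \<noteq> 0 \<and> y \<noteq> 0 then a' t (x - 1) (y - 1) else 0)"

definition st_ddg :: "(real \<Rightarrow> nat \<Rightarrow> nat \<Rightarrow> real) \<Rightarrow> real \<Rightarrow> nat \<Rightarrow> nat \<Rightarrow> nat \<Rightarrow> nat \<Rightarrow> real" where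
  "st_ddg a'' t d c x y =
     (if d = 0 \<and> c = 0 \<and> x \<noteq> 0 \<and> y \<noteq> 0 then a'' t (x - 1) (y - 1) else 0)"

definition st_C :: "(nat \<Rightarrow> nat \<Rightarrow> nat \<Rightarrow> real) \<Rightarrow> nat \<Rightarrow> nat \<Rightarrow> nat \<Rightarrow> real" where
  "st_C gam e x y = (if e = 0 \<or> x = 0 \<or> y = 0 then 0 else gam (e - 1) (x - 1) (y - 1))"

definition st_Ric :: "(real \<Rightarrow> nat \<Rightarrow> nat \<Rightarrow> real) \<Rightarrow> (real \<Rightarrow> nat \<Rightarrow> nat \<Rightarrow> real)
    \<Rightarrow> (real \<Rightarrow> nat \<Rightarrow> nat \<Rightarrow> real) \<Rightarrow> (nat \<Rightarrow> nat \<Rightarrow> nat \<Rightarrow> real) \<Rightarrow> real \<Rightarrow> nat \<Rightarrow> nat \<Rightarrow> real" where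
  "st_Ric a a' a'' gam t = frame_Ric 4 (st_g a t) (mat_inv 4 (st_g a t)) (st_dg a' t) (st_ddg a'' t) (st_C gam)"

definition st_Scal :: "(real \<Rightarrow> nat \<Rightarrow> nat \<Rightarrow> real) \<Rightarrow> (real \<Rightarrow> nat \<Rightarrow> nat \<Rightarrow> real)
    \<Rightarrow> (real \<Rightarrow> nat \<Rightarrow> nat \<Rightarrow> real) \<Rightarrow> (nat \<Rightarrow> nat \<Rightarrow> nat \<Rightarrow> real) \<Rightarrow> real \<Rightarrow> real" where
  "st_Scal a a' a'' gam t = frame_Scal 4 (st_g a t) (mat_inv 4 (st_g a t)) (st_dg a' t) (st_ddg a'' t) (st_C gam)"

text \<open>Energy-momentum tensor determined by Einstein's equations
  T = Ric - S/2 g + Lambda g, in the frame \<partial>_t, e_i.\<close>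

definition st_T :: "(real \<Rightarrow> nat \<Rightarrow> nat \<Rightarrow> real) \<Rightarrow> (real \<Rightarrow> nat \<Rightarrow> nat \<Rightarrow> real)
    \<Rightarrow> (real \<Rightarrow> nat \<Rightarrow> nat \<Rightarrow> real) \<Rightarrow> (nat \<Rightarrow> nat \<Rightarrow> nat \<Rightarrow> real) \<Rightarrow> real \<Rightarrow> real \<Rightarrow> nat \<Rightarrow> nat \<Rightarrow> real" where
  "st_T a a' a'' gam \<Lambda> t x y = st_Ric a a' a'' gam t x y
      - st_Scal a a' a'' gam t / 2 * st_g a t x y + \<Lambda> * st_g a t x y"

definition rho :: "(real \<Rightarrow> nat \<Rightarrow> nat \<Rightarrow> real) \<Rightarrow> (real \<Rightarrow> nat \<Rightarrow> nat \<Rightarrow> real)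
    \<Rightarrow> (real \<Rightarrow> nat \<Rightarrow> nat \<Rightarrow> real) \<Rightarrow> (nat \<Rightarrow> nat \<Rightarrow> nat \<Rightarrow> real) \<Rightarrow> real \<Rightarrow> real \<Rightarrow> real" where
  "rho a a' a'' gam \<Lambda> t = st_T a a' a'' gam \<Lambda> t 0 0"

text \<open>Scalar curvature of G x {t} with the left invariant metric a(t).\<close>

definition Sbar :: "(real \<Rightarrow> nat \<Rightarrow> nat \<Rightarrow> real) \<Rightarrow> (nat \<Rightarrow> nat \<Rightarrow> nat \<Rightarrow> real) \<Rightarrow> real \<Rightarrow> real" where
  "Sbar a gam t = frame_Scal 3 (a t) (mat_inv 3 (a t)) (\<lambda>_ _ _. 0) (\<lambda>_ _ _ _. 0) gam"

definition kbar :: "(real \<Rightarrow> nat \<Rightarrow> nat \<Rightarrow> real) \<Rightarrow> real \<Rightarrow> nat \<Rightarrow> nat \<Rightarrow> real" where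
  "kbar a' t i j = a' t i j / 2"

definition theta :: "(real \<Rightarrow> nat \<Rightarrow> nat \<Rightarrow> real) \<Rightarrow> (real \<Rightarrow> nat \<Rightarrow> nat \<Rightarrow> real) \<Rightarrow> real \<Rightarrow> real" where
  "theta a a' t = (\<Sum>i<3. \<Sum>j<3. mat_inv 3 (a t) i j * kbar a' t i j)"

definition sigmabar :: "(real \<Rightarrow> nat \<Rightarrow> nat \<Rightarrow> real) \<Rightarrow> (real \<Rightarrow> nat \<Rightarrow> nat \<Rightarrow> real) \<Rightarrow> real \<Rightarrow> nat \<Rightarrow> nat \<Rightarrow> real" where
  "sigmabar a a' t i j = kbar a' t i j - theta a a' t / 3 * a t i j"

definition Sigma_low :: "(real \<Rightarrow> nat \<Rightarrow> nat \<Rightarrow> real) \<Rightarrow> (real \<Rightarrow> nat \<Rightarrow> nat \<Rightarrow> real) \<Rightarrow> real \<Rightarrow> nat \<Rightarrow> nat \<Rightarrow> real" where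
  "Sigma_low a a' t i j = sigmabar a a' t i j / theta a a' t"

definition Sigma_mixed :: "(real \<Rightarrow> nat \<Rightarrow> nat \<Rightarrow> real) \<Rightarrow> (real \<Rightarrow> nat \<Rightarrow> nat \<Rightarrow> real) \<Rightarrow> real \<Rightarrow> nat \<Rightarrow> nat \<Rightarrow> real" where
  "Sigma_mixed a a' t i m = (\<Sum>j<3. mat_inv 3 (a t) i j * Sigma_low a a' t j m)"

end

theory Submission
  imports Defs
begin

text \<open>
  The \<open>00\<close> component of Einstein's equations is the Hamiltonian constraint
  \<open>2 \<rho> + 2 \<Lambda> = S + \<theta>\<^sup>2 - |k|\<^sup>2\<close>, norms taken with the inverse metric \<open>a\<^sup>-\<^sup>1\<close>.
  With \<open>\<rho>, \<Lambda> \<ge> 0\<close> it bounds the normalised shear \<open>\<Sigma>\<close>: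
  \<open>|\<Sigma>|\<^sup>2 = |k|\<^sup>2 / \<theta>\<^sup>2 - 1/3 \<le> S\<^sub>+ / \<theta>\<^sup>2 + 2/3\<close>.
  Since \<open>\<Sigma>\<close> is traceless, Cauchy-Schwarz against the traceless part of \<open>v \<otimes> v\<close> gives
  \<open>\<Sigma>(w,w)\<^sup>2 \<le> 2/3 |\<Sigma>|\<^sup>2 |v|\<^sup>4\<close> for \<open>w = a\<^sup>-\<^sup>1 v\<close>, hence
  \<open>\<Sigma>(w,w) \<le> (2/3 + S\<^sub>+ / (2 \<theta>\<^sup>2)) |v|\<^sup>2\<close>, which is the claim.
  Positivity of the inner product on tensors comes from a Cholesky factorisation of \<open>a\<^sup>-\<^sup>1\<close>.
\<close>

lemma sum_3: "sum f {..<3::nat} = f 0 + f 1 + f 2"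
  by (simp add: numeral_eq_Suc)

lemma less_3_cases: "i < (3::nat) \<Longrightarrow> i = 0 \<or> i = 1 \<or> i = 2"
  by auto

lemma sum_4: "sum f {..<4::nat} = f 0 + (\<Sum>i<3. f (Suc i))"
  by (simp add: numeral_eq_Suc sum.lessThan_Suc_shift del: sum.lessThan_Suc)

lemma sum_pull_out:
  "(\<Sum>i\<in>A. \<Sum>j\<in>B. \<Sum>p\<in>C. f i j p) = (\<Sum>p\<in>C. \<Sum>i\<in>A. \<Sum>j\<in>B. f i j p)"
proof -
  have "(\<Sum>i\<in>A. \<Sum>j\<in>B. \<Sum>p\<in>C. f i j p) = (\<Sum>i\<in>A. \<Sum>p\<in>C. \<Sum>j\<in>B. f i j p)"
    by (intro sum.cong refl sum.swap)
  also have "\<dots> = (\<Sum>p\<in>C. \<Sum>i\<in>A. \<Sum>j\<in>B. f i j p)"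
    by (rule sum.swap)
  finally show ?thesis .
qed

lemma sum_swap_pairs:
  "(\<Sum>i\<in>A. \<Sum>j\<in>B. \<Sum>k\<in>C. \<Sum>l\<in>D. f i j k l) = (\<Sum>k\<in>C. \<Sum>l\<in>D. \<Sum>i\<in>A. \<Sum>j\<in>B. f i j k l)"
  by (subst sum_pull_out) (intro sum.cong refl sum_pull_out)

section \<open>Symmetric and positive definite matrices\<close>

definition sym_mat :: "nat \<Rightarrow> (nat \<Rightarrow> nat \<Rightarrow> real) \<Rightarrow> bool" where
  "sym_mat n A \<longleftrightarrow> (\<forall>i<n. \<forall>j<n. A i j = A j i)"

definition posdef_mat :: "nat \<Rightarrow> (nat \<Rightarrow> nat \<Rightarrow> real) \<Rightarrow> bool" where
  "posdef_mat n A \<longleftrightarrow> (\<forall>w. (\<exists>i<n. w i \<noteq> 0) \<longrightarrow> 0 < (\<Sum>i<n. \<Sum>j<n. A i j * w i * w j))"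

lemma quadratic_form_factor:
  fixes b L :: "nat \<Rightarrow> nat \<Rightarrow> real"
  assumes "\<forall>i<n. \<forall>j<n. b i j = (\<Sum>p<n. L i p * L j p)"
  shows "(\<Sum>i<n. \<Sum>j<n. b i j * y i * y j) = (\<Sum>p<n. (\<Sum>i<n. L i p * y i)\<^sup>2)"
proof -
  have "b i j * y i * y j = (\<Sum>p<n. L i p * y i * (L j p * y j))" if "i < n" "j < n" for i j
  proof -
    have "b i j * y i * y j = (\<Sum>p<n. L i p * L j p) * (y i * y j)"
      using assms that by simp
    then show ?thesis
      unfolding sum_distrib_right by (simp add: mult_ac)
  qed
  then have "(\<Sum>i<n. \<Sum>j<n. b i j * y i * y j) = (\<Sum>i<n. \<Sum>j<n. \<Sum>p<n. L i p * y i * (L j p * y j))"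
    by (intro sum.cong refl) auto
  also have "\<dots> = (\<Sum>p<n. \<Sum>i<n. \<Sum>j<n. L i p * y i * (L j p * y j))"
    by (rule sum_pull_out)
  also have "\<dots> = (\<Sum>p<n. (\<Sum>i<n. L i p * y i)\<^sup>2)"
    by (simp add: power2_eq_square sum_product)
  finally show ?thesis .
qed

lemma trace_mult_inverse:
  assumes a: "sym_mat n a" and inv: "\<forall>i<n. \<forall>k<n. (\<Sum>j<n. b i j * a j k) = (if i = k then 1 else 0)"
  shows "(\<Sum>i<n. \<Sum>k<n. b i k * a i k) = real n"
proof -
  have "(\<Sum>k<n. b i k * a i k) = (\<Sum>k<n. b i k * a k i)" if "i < n" for i
    using a that by (intro sum.cong) (auto simp: sym_mat_def)
  then show ?thesis using inv by simp
qed

lemma mat_inv_eqI: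
  assumes right: "\<forall>i<n. \<forall>k<n. (\<Sum>j<n. A i j * B j k) = (if i = k then 1 else 0)"
    and left: "\<forall>i<n. \<forall>k<n. (\<Sum>j<n. C i j * A j k) = (if i = k then 1 else 0)"
    and outside: "\<forall>i j. \<not> (i < n \<and> j < n) \<longrightarrow> B i j = 0"
  shows "mat_inv n A = B"
proof -
  have right_inverse_eq_left: "B' i k = C i k"
    if "\<forall>i<n. \<forall>k<n. (\<Sum>j<n. A i j * B' j k) = (if i = k then 1 else 0)" and "i < n" "k < n" for B' i k
  proof -
    have "C i k = (\<Sum>j<n. C i j * (if j = k then 1 else 0))"
      using that by (simp add: if_distrib sum.delta' cong: if_cong)
    also have "\<dots> = (\<Sum>j<n. C i j * (\<Sum>l<n. A j l * B' l k))"
      using that by (intro sum.cong) auto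
    also have "\<dots> = (\<Sum>j<n. \<Sum>l<n. C i j * A j l * B' l k)"
      by (simp add: sum_distrib_left mult.assoc)
    also have "\<dots> = (\<Sum>l<n. (\<Sum>j<n. C i j * A j l) * B' l k)"
      by (subst sum.swap) (simp add: sum_distrib_right)
    also have "\<dots> = (\<Sum>l<n. if i = l then B' l k else 0)"
      using left that by (intro sum.cong) auto
    also have "\<dots> = B' i k"
      using \<open>i < n\<close> by simp
    finally show ?thesis by simp
  qed
  show ?thesis
    unfolding mat_inv_def
  proof (rule the_equality)
    fix B' assume B': "(\<forall>i<n. \<forall>k<n. (\<Sum>j<n. A i j * B' j k) = (if i = k then 1 else 0)) \<and>
          (\<forall>i j. \<not> (i < n \<and> j < n) \<longrightarrow> B' i j = 0)"
    show "B' = B"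
    proof (intro ext)
      fix i k
      show "B' i k = B i k"
        using B' right outside right_inverse_eq_left[of B' i k] right_inverse_eq_left[of B i k]
        by (cases "i < n \<and> k < n") auto
    qed
  qed (use right outside in blast)
qed

definition det3 :: "(nat \<Rightarrow> nat \<Rightarrow> real) \<Rightarrow> real" where
  "det3 A = A 0 0 * (A 1 1 * A 2 2 - A 1 2 * A 2 1) - A 0 1 * (A 1 0 * A 2 2 - A 1 2 * A 2 0)
           + A 0 2 * (A 1 0 * A 2 1 - A 1 1 * A 2 0)"

definition adj3 :: "(nat \<Rightarrow> nat \<Rightarrow> real) \<Rightarrow> nat \<Rightarrow> nat \<Rightarrow> real" where
  "adj3 A i j =
     (if i = 0 \<and> j = 0 then A 1 1 * A 2 2 - A 1 2 * A 2 1 else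
      if i = 0 \<and> j = 1 then A 0 2 * A 2 1 - A 0 1 * A 2 2 else
      if i = 0 \<and> j = 2 then A 0 1 * A 1 2 - A 0 2 * A 1 1 else
      if i = 1 \<and> j = 0 then A 1 2 * A 2 0 - A 1 0 * A 2 2 else
      if i = 1 \<and> j = 1 then A 0 0 * A 2 2 - A 0 2 * A 2 0 else
      if i = 1 \<and> j = 2 then A 0 2 * A 1 0 - A 0 0 * A 1 2 else
      if i = 2 \<and> j = 0 then A 1 0 * A 2 1 - A 1 1 * A 2 0 else
      if i = 2 \<and> j = 1 then A 0 1 * A 2 0 - A 0 0 * A 2 1 else
      if i = 2 \<and> j = 2 then A 0 0 * A 1 1 - A 0 1 * A 1 0 else 0)"

definition inv3 :: "(nat \<Rightarrow> nat \<Rightarrow> real) \<Rightarrow> nat \<Rightarrow> nat \<Rightarrow> real" where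
  "inv3 A i j = (if i < 3 \<and> j < 3 then adj3 A i j / det3 A else 0)"

lemma mult_adj3_right:
  assumes "i < 3" "k < 3"
  shows "(\<Sum>j<3. A i j * adj3 A j k) = (if i = k then det3 A else 0)"
  using less_3_cases[OF assms(1)] less_3_cases[OF assms(2)]
  by (elim disjE) (simp_all add: sum_3 adj3_def det3_def algebra_simps)

lemma mult_adj3_left:
  assumes "i < 3" "k < 3"
  shows "(\<Sum>j<3. adj3 A i j * A j k) = (if i = k then det3 A else 0)"
  using less_3_cases[OF assms(1)] less_3_cases[OF assms(2)]
  by (elim disjE) (simp_all add: sum_3 adj3_def det3_def algebra_simps)

lemma mult_inv3_right:
  assumes "det3 A \<noteq> 0" "i < 3" "k < 3"
  shows "(\<Sum>j<3. A i j * inv3 A j k) = (if i = k then 1 else 0)"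
  using assms mult_adj3_right[OF assms(2,3)] by (simp add: inv3_def sum_divide_distrib[symmetric])

lemma mult_inv3_left:
  assumes "det3 A \<noteq> 0" "i < 3" "k < 3"
  shows "(\<Sum>j<3. inv3 A i j * A j k) = (if i = k then 1 else 0)"
  using assms mult_adj3_left[OF assms(2,3)] by (simp add: inv3_def sum_divide_distrib[symmetric])

lemma mat_inv_3_eq_inv3:
  assumes "det3 A \<noteq> 0"
  shows "mat_inv 3 A = inv3 A"
  using mult_inv3_right[OF assms] mult_inv3_left[OF assms]
  by (intro mat_inv_eqI[where C = "inv3 A"]) (auto simp: inv3_def)

lemma posdef3_leading_minors:
  assumes sym: "sym_mat 3 A" and pd: "posdef_mat 3 A"
  shows "0 < A 0 0" "0 < A 0 0 * A 1 1 - A 0 1 * A 1 0" "0 < det3 A"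
proof -
  have s: "A 1 0 = A 0 1" "A 2 0 = A 0 2" "A 2 1 = A 1 2"
    using sym by (auto simp: sym_mat_def)
  have pd': "0 < (\<Sum>i<3. \<Sum>j<3. A i j * w i * w j)" if "w k \<noteq> 0" "k < 3" for w k
    using pd that unfolding posdef_mat_def by blast
  have "0 < (\<Sum>i<3. \<Sum>j<3. A i j * (if i = 0 then 1 else 0) * (if j = 0 then 1 else 0))"
    by (rule pd'[of _ 0]) auto
  then show minor1: "0 < A 0 0" by (simp add: sum_3)
  \<comment> \<open>Test vectors: a vector orthogonal to the first row, and the last column of the adjugate.\<close>
  have "0 < (\<Sum>i<3. \<Sum>j<3. A i j * (\<lambda>i. if i = 0 then - A 0 1 else if i = 1 then A 0 0 else 0) i
      * (\<lambda>i. if i = 0 then - A 0 1 else if i = 1 then A 0 0 else 0) j)"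
    using minor1 by (intro pd'[of _ 1]) auto
  then have "0 < A 0 0 * (A 0 0 * A 1 1 - A 0 1 * A 1 0)"
    by (simp add: sum_3 s algebra_simps)
  then show minor2: "0 < A 0 0 * A 1 1 - A 0 1 * A 1 0"
    using minor1 by (simp add: zero_less_mult_iff)
  have "0 < (\<Sum>i<3. \<Sum>j<3. A i j * adj3 A i 2 * adj3 A j 2)"
    using minor2 by (intro pd'[of _ 2]) (auto simp: adj3_def)
  then have "0 < det3 A * (A 0 0 * A 1 1 - A 0 1 * A 1 0)"
    by (simp add: sum_3 s adj3_def det3_def algebra_simps)
  then show "0 < det3 A"
    using minor2 by (simp add: zero_less_mult_iff)
qed

lemma sym_mat_inv3:
  assumes "sym_mat 3 A"
  shows "sym_mat 3 (inv3 A)"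
proof -
  have s: "A (Suc 0) 0 = A 0 (Suc 0)" "A 2 0 = A 0 2" "A 2 (Suc 0) = A (Suc 0) 2"
    using assms by (auto simp: sym_mat_def)
  have "adj3 A i j = adj3 A j i" if "i < 3" "j < 3" for i j
    using less_3_cases[OF that(1)] less_3_cases[OF that(2)]
    by (elim disjE) (simp_all add: adj3_def s mult.commute)
  then show ?thesis by (simp add: sym_mat_def inv3_def)
qed

lemma posdef_mat_inv3:
  assumes sym: "sym_mat 3 A" and pd: "posdef_mat 3 A"
  shows "posdef_mat 3 (inv3 A)"
  unfolding posdef_mat_def
proof (intro allI impI)
  fix v :: "nat \<Rightarrow> real" assume v: "\<exists>i<3. v i \<noteq> 0"
  have det: "det3 A \<noteq> 0" using posdef3_leading_minors[OF sym pd] by simp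
  define u where "u k = (\<Sum>j<3. inv3 A k j * v j)" for k
  have Au: "(\<Sum>l<3. A k l * u l) = v k" if "k < 3" for k
  proof -
    have "(\<Sum>l<3. A k l * u l) = (\<Sum>j<3. (\<Sum>l<3. A k l * inv3 A l j) * v j)"
      by (simp add: u_def sum_3 algebra_simps)
    also have "\<dots> = (\<Sum>j<3. (if k = j then 1 else 0) * v j)"
      using mult_inv3_right[OF det that] by simp
    also have "\<dots> = v k"
      using less_3_cases[OF that] by (auto simp: sum_3)
    finally show ?thesis .
  qed
  have "\<exists>i<3. u i \<noteq> 0"
  proof (rule ccontr)
    assume "\<not> (\<exists>i<3. u i \<noteq> 0)"
    then have "\<forall>k<3. v k = 0" using Au by (auto simp: lessThan_def)
    then show False using v by auto
  qed
  then have "0 < (\<Sum>k<3. \<Sum>l<3. A k l * u k * u l)"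
    using pd by (auto simp: posdef_mat_def)
  also have "\<dots> = (\<Sum>k<3. u k * (\<Sum>l<3. A k l * u l))"
    by (simp add: sum_distrib_left algebra_simps)
  also have "\<dots> = (\<Sum>k<3. u k * v k)"
    using Au by (intro sum.cong) auto
  also have "\<dots> = (\<Sum>i<3. \<Sum>j<3. inv3 A i j * v i * v j)"
    unfolding u_def by (simp add: sum_distrib_right sum_distrib_left algebra_simps)
  finally show "0 < (\<Sum>i<3. \<Sum>j<3. inv3 A i j * v i * v j)" .
qed

lemma schur_complement3:
  fixes b :: "nat \<Rightarrow> nat \<Rightarrow> real"
  assumes s: "b 1 0 = b 0 1" "b 2 0 = b 0 2" "b 2 1 = b 1 2"
    and m2: "m2 = b 0 0 * b 1 1 - b 0 1 * b 1 0" "m2 \<noteq> 0" and b00: "b 0 0 \<noteq> 0"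
  shows "b 0 2 * b 0 2 / b 0 0 + (b 0 0 * b 1 2 - b 0 2 * b 0 1)\<^sup>2 / (b 0 0 * m2) + det3 b / m2 = b 2 2"
proof -
  have "b 0 2 * b 0 2 * m2 + (b 0 0 * b 1 2 - b 0 2 * b 0 1)\<^sup>2 + b 0 0 * det3 b = b 2 2 * (b 0 0 * m2)"
    unfolding m2(1) det3_def s by (simp add: algebra_simps power2_eq_square)
  then show ?thesis
    using m2(2) b00 by (simp add: field_simps)
qed

lemma cholesky3:
  assumes sym: "sym_mat 3 b" and pd: "posdef_mat 3 b"
  obtains L :: "nat \<Rightarrow> nat \<Rightarrow> real" where "\<forall>i<3. \<forall>j<3. b i j = (\<Sum>p<3. L i p * L j p)"
proof -
  have s: "b 1 0 = b 0 1" "b 2 0 = b 0 2" "b 2 1 = b 1 2"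
    using sym by (auto simp: sym_mat_def)
  note minors = posdef3_leading_minors[OF sym pd]
  define m2 where "m2 = b 0 0 * b 1 1 - b 0 1 * b 1 0"
  have m2: "0 < m2" using minors by (simp add: m2_def)
  define r0 where "r0 = sqrt (b 0 0)"
  define r1 where "r1 = sqrt (m2 / b 0 0)"
  define r2 where "r2 = sqrt (det3 b / m2)"
  define c where "c = (b 0 0 * b 1 2 - b 0 2 * b 0 1) / b 0 0"
  have r0: "0 < r0" "r0 * r0 = b 0 0" using minors by (simp_all add: r0_def)
  have r1: "0 < r1" "r1 * r1 = m2 / b 0 0" using minors m2 by (simp_all add: r1_def)
  have r2: "0 < r2" "r2 * r2 = det3 b / m2" using minors m2 by (simp_all add: r2_def)
  define L :: "nat \<Rightarrow> nat \<Rightarrow> real" where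
    "L i p = (if i = 0 \<and> p = 0 then r0 else if i = 1 \<and> p = 0 then b 0 1 / r0
      else if i = 2 \<and> p = 0 then b 0 2 / r0 else if i = 1 \<and> p = 1 then r1
      else if i = 2 \<and> p = 1 then c / r1 else if i = 2 \<and> p = 2 then r2 else 0)" for i p
  have e0: "(\<Sum>p<3. L 0 p * L j p) = b 0 j" if "j < 3" for j
    using less_3_cases[OF that] r0 by (auto simp: sum_3 L_def)
  have "(\<Sum>p<3. L 1 p * L 1 p) = b 0 1 * b 0 1 / (r0 * r0) + r1 * r1"
    by (simp add: sum_3 L_def)
  then have e11: "(\<Sum>p<3. L 1 p * L 1 p) = b 1 1"
    unfolding r0 r1 m2_def using minors s by (simp add: field_simps)
  have "(\<Sum>p<3. L 1 p * L 2 p) = b 0 1 * b 0 2 / (r0 * r0) + c"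
    using r1 by (simp add: sum_3 L_def)
  then have e12: "(\<Sum>p<3. L 1 p * L 2 p) = b 1 2"
    unfolding r0 c_def using minors by (simp add: field_simps)
  have "(\<Sum>p<3. L 2 p * L 2 p) = b 0 2 * b 0 2 / (r0 * r0) + c * c / (r1 * r1) + r2 * r2"
    by (simp add: sum_3 L_def)
  also have "\<dots> = b 0 2 * b 0 2 / b 0 0 + (b 0 0 * b 1 2 - b 0 2 * b 0 1)\<^sup>2 / (b 0 0 * m2)
      + det3 b / m2"
    unfolding r0 r1 r2 c_def using minors by (simp add: power2_eq_square)
  also have "\<dots> = b 2 2"
    using minors m2 by (intro schur_complement3[OF s m2_def]) simp_all
  finally have e22: "(\<Sum>p<3. L 2 p * L 2 p) = b 2 2" .
  have "b i j = (\<Sum>p<3. L i p * L j p)" if "i < 3" "j < 3" for i j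
    using less_3_cases[OF that(1)] less_3_cases[OF that(2)] e0[of 0] e0[of 1] e0[of 2] e11 e12 e22 s
    by (elim disjE) (simp_all add: mult.commute)
  then show ?thesis by (intro that[of L]) blast
qed

section \<open>The inner product of covariant 2-tensors\<close>

definition tensor_inner :: "nat \<Rightarrow> (nat \<Rightarrow> nat \<Rightarrow> real) \<Rightarrow> (nat \<Rightarrow> nat \<Rightarrow> real) \<Rightarrow> (nat \<Rightarrow> nat \<Rightarrow> real) \<Rightarrow> real" where
  "tensor_inner n b X Y = (\<Sum>i<n. \<Sum>j<n. \<Sum>k<n. \<Sum>l<n. b i k * b j l * X i j * Y k l)"

lemma tensor_inner_commute:
  assumes "sym_mat n b"
  shows "tensor_inner n b X Y = tensor_inner n b Y X"
  unfolding tensor_inner_def using assms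
  by (subst sum_swap_pairs) (intro sum.cong refl, simp add: sym_mat_def)

lemma tensor_inner_linear:
  "tensor_inner n b (\<lambda>i j. \<alpha> * X i j + \<beta> * Y i j) Z = \<alpha> * tensor_inner n b X Z + \<beta> * tensor_inner n b Y Z"
  unfolding tensor_inner_def by (simp add: sum.distrib sum_distrib_left algebra_simps)

lemma tensor_inner_rank_one:
  "tensor_inner n b X (\<lambda>k l. u k * u l)
     = (\<Sum>i<n. \<Sum>j<n. X i j * (\<Sum>k<n. b i k * u k) * (\<Sum>l<n. b j l * u l))"
  unfolding tensor_inner_def by (simp add: sum_distrib_left sum_distrib_right algebra_simps)

lemma tensor_inner_metric:
  assumes a: "sym_mat n a" and inv: "\<forall>i<n. \<forall>k<n. (\<Sum>j<n. b i j * a j k) = (if i = k then 1 else 0)"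
  shows "tensor_inner n b X a = (\<Sum>i<n. \<Sum>k<n. b i k * X i k)"
proof -
  have contract: "(\<Sum>j<n. \<Sum>l<n. b i k * b j l * X i j * a k l) = b i k * X i k" if "i < n" "k < n" for i k
  proof -
    have "(\<Sum>j<n. \<Sum>l<n. b i k * b j l * X i j * a k l) = (\<Sum>j<n. b i k * X i j * (\<Sum>l<n. b j l * a l k))"
      using a that by (auto simp: sym_mat_def sum_distrib_left algebra_simps intro!: sum.cong)
    also have "\<dots> = (\<Sum>j<n. if j = k then b i k * X i j else 0)"
      using inv that by (intro sum.cong) auto
    finally show ?thesis using that by simp
  qed
  have "tensor_inner n b X a = (\<Sum>i<n. \<Sum>k<n. \<Sum>j<n. \<Sum>l<n. b i k * b j l * X i j * a k l)"
    unfolding tensor_inner_def by (intro sum.cong refl sum.swap)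
  also have "\<dots> = (\<Sum>i<n. \<Sum>k<n. b i k * X i k)"
    using contract by (intro sum.cong refl) auto
  finally show ?thesis .
qed

lemma tensor_inner_eq_contraction:
  assumes "sym_mat n b" "sym_mat n K"
  shows "(\<Sum>i<n. \<Sum>j<n. \<Sum>k<n. \<Sum>l<n. b i j * b k l * (K k j * K i l)) = tensor_inner n b K K"
proof -
  have "(\<Sum>i<n. \<Sum>j<n. \<Sum>k<n. \<Sum>l<n. b i j * b k l * (K k j * K i l))
      = (\<Sum>i<n. \<Sum>j<n. \<Sum>k<n. \<Sum>l<n. b j i * b k l * K j k * K i l)"
    using assms by (intro sum.cong refl) (auto simp: sym_mat_def)
  also have "\<dots> = (\<Sum>j<n. \<Sum>k<n. \<Sum>i<n. \<Sum>l<n. b j i * b k l * K j k * K i l)"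
    by (rule sum_pull_out[symmetric])
  finally show ?thesis
    unfolding tensor_inner_def .
qed

lemma tensor_inner_nonneg:
  assumes factor: "\<forall>i<n. \<forall>j<n. b i j = (\<Sum>p<n. L i p * L j p)"
  shows "0 \<le> tensor_inner n b X X"
proof -
  define Z where "Z i k = (\<Sum>j<n. \<Sum>l<n. b j l * X i j * X k l)" for i k
  define y where "y p j = (\<Sum>i<n. L i p * X i j)" for p j
  have "tensor_inner n b X X = (\<Sum>i<n. \<Sum>k<n. \<Sum>j<n. \<Sum>l<n. b i k * b j l * X i j * X k l)"
    unfolding tensor_inner_def by (intro sum.cong refl sum.swap)
  also have "\<dots> = (\<Sum>i<n. \<Sum>k<n. b i k * Z i k)"
    unfolding Z_def by (simp add: sum_distrib_left mult.assoc)
  also have "\<dots> = (\<Sum>i<n. \<Sum>k<n. \<Sum>p<n. L i p * L k p * Z i k)"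
    using factor by (intro sum.cong refl) (simp add: sum_distrib_right)
  also have "\<dots> = (\<Sum>p<n. \<Sum>i<n. \<Sum>k<n. L i p * L k p * Z i k)"
    by (rule sum_pull_out)
  also have "\<dots> = (\<Sum>p<n. \<Sum>i<n. \<Sum>k<n. \<Sum>j<n. \<Sum>l<n. b j l * (L i p * X i j) * (L k p * X k l))"
    unfolding Z_def by (simp add: sum_distrib_left mult_ac)
  also have "\<dots> = (\<Sum>p<n. \<Sum>j<n. \<Sum>l<n. b j l * y p j * y p l)"
    unfolding y_def by (subst sum_swap_pairs) (simp add: sum_distrib_left sum_distrib_right mult_ac)
  also have "\<dots> = (\<Sum>p<n. \<Sum>r<n. (\<Sum>j<n. L j r * y p j)\<^sup>2)"
    using quadratic_form_factor[OF factor] by simp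
  finally show ?thesis by (simp add: sum_nonneg)
qed

lemma nonneg_quadratic_discriminant:
  fixes p q r :: real
  assumes "0 \<le> q" and "\<And>t. 0 \<le> p + 2 * t * r + t\<^sup>2 * q"
  shows "r\<^sup>2 \<le> p * q"
proof (cases "q = 0")
  case True
  have "r = 0"
  proof (rule ccontr)
    assume "r \<noteq> 0"
    then have "p + 2 * (- (p + 1) / (2 * r)) * r + (- (p + 1) / (2 * r))\<^sup>2 * q = -1"
      using True by (simp add: field_simps)
    then show False using assms(2)[of "- (p + 1) / (2 * r)"] by simp
  qed
  then show ?thesis using True by simp
next
  case False
  with assms(1) have "0 < q" by simp
  have "0 \<le> p + 2 * (- r / q) * r + (- r / q)\<^sup>2 * q" by (rule assms(2))
  also have "\<dots> = (p * q - r\<^sup>2) / q" using \<open>0 < q\<close> by (simp add: field_simps power2_eq_square)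
  finally show ?thesis using \<open>0 < q\<close> by (simp add: zero_le_divide_iff)
qed

lemma tensor_inner_Cauchy_Schwarz:
  assumes b: "sym_mat n b" and nonneg: "\<And>Z. 0 \<le> tensor_inner n b Z Z"
  shows "(tensor_inner n b X Y)\<^sup>2 \<le> tensor_inner n b X X * tensor_inner n b Y Y"
proof (rule nonneg_quadratic_discriminant)
  show "0 \<le> tensor_inner n b Y Y" by (rule nonneg)
  fix t :: real
  let ?Z = "\<lambda>i j. X i j + t * Y i j"
  have lin: "tensor_inner n b ?Z W = tensor_inner n b X W + t * tensor_inner n b Y W" for W
    using tensor_inner_linear[of n b 1 X t Y] by simp
  have "tensor_inner n b ?Z ?Z = tensor_inner n b X ?Z + t * tensor_inner n b Y ?Z"
    by (rule lin)
  also have "\<dots> = tensor_inner n b ?Z X + t * tensor_inner n b ?Z Y"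
    by (metis tensor_inner_commute[OF b])
  also have "\<dots> = tensor_inner n b X X + 2 * t * tensor_inner n b X Y + t\<^sup>2 * tensor_inner n b Y Y"
    unfolding lin using tensor_inner_commute[OF b, of Y X]
    by (simp add: power2_eq_square algebra_simps)
  finally show "0 \<le> tensor_inner n b X X + 2 * t * tensor_inner n b X Y + t\<^sup>2 * tensor_inner n b Y Y"
    using nonneg[of ?Z] by simp
qed

lemma traceless_tensor_bound:
  fixes b a S L :: "nat \<Rightarrow> nat \<Rightarrow> real" and u :: "nat \<Rightarrow> real"
  assumes n: "0 < n"
    and factor: "\<forall>i<n. \<forall>j<n. b i j = (\<Sum>p<n. L i p * L j p)"
    and a: "sym_mat n a" and inv: "\<forall>i<n. \<forall>k<n. (\<Sum>j<n. b i j * a j k) = (if i = k then 1 else 0)"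
    and traceless: "(\<Sum>i<n. \<Sum>k<n. b i k * S i k) = 0"
  defines "w i \<equiv> \<Sum>k<n. b i k * u k"
    and "s \<equiv> \<Sum>i<n. \<Sum>k<n. b i k * u i * u k"
  shows "(\<Sum>i<n. \<Sum>j<n. S i j * w i * w j)\<^sup>2 \<le> (real n - 1) / real n * s\<^sup>2 * tensor_inner n b S S"
proof -
  have b: "sym_mat n b" using factor by (simp add: sym_mat_def mult.commute)
  \<comment> \<open>Cauchy-Schwarz against the traceless part \<open>Y\<close> of \<open>u \<otimes> u\<close>.\<close>
  define U where "U = (\<lambda>k l. u k * u l)"
  define Y where "Y = (\<lambda>k l. U k l + (- s / n) * a k l)"
  have lin: "tensor_inner n b Y W = tensor_inner n b U W + (- s / n) * tensor_inner n b a W" for W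
    using tensor_inner_linear[of n b 1 U "- s / n" a] unfolding Y_def by simp
  have uw: "(\<Sum>i<n. u i * w i) = s"
    unfolding w_def s_def by (simp add: sum_distrib_left mult_ac)
  have UU: "tensor_inner n b U U = s\<^sup>2"
    unfolding U_def tensor_inner_rank_one w_def[symmetric] uw[symmetric]
    by (simp add: power2_eq_square sum_product mult_ac)
  have Ua: "tensor_inner n b U a = s"
    unfolding tensor_inner_metric[OF a inv] s_def U_def by (simp add: mult_ac)
  have aa: "tensor_inner n b a a = real n"
    unfolding tensor_inner_metric[OF a inv] by (rule trace_mult_inverse[OF a inv])
  have "tensor_inner n b S Y = tensor_inner n b S U + (- s / n) * tensor_inner n b S a"
    using lin[of S] by (metis tensor_inner_commute[OF b])
  also have "\<dots> = (\<Sum>i<n. \<Sum>j<n. S i j * w i * w j)"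
    unfolding U_def tensor_inner_rank_one tensor_inner_metric[OF a inv] traceless w_def by simp
  finally have SY: "tensor_inner n b S Y = (\<Sum>i<n. \<Sum>j<n. S i j * w i * w j)" .
  have "tensor_inner n b Y Y = tensor_inner n b U U + 2 * (- s / n) * tensor_inner n b U a
      + (- s / n)\<^sup>2 * tensor_inner n b a a"
    using lin[of Y] lin[of U] lin[of a] tensor_inner_commute[OF b, of U Y]
      tensor_inner_commute[OF b, of a Y] tensor_inner_commute[OF b, of a U]
    by (simp add: power2_eq_square algebra_simps)
  also have "\<dots> = (real n - 1) / real n * s\<^sup>2"
    unfolding UU Ua aa using n by (simp add: power2_eq_square field_simps)
  finally have YY: "tensor_inner n b Y Y = (real n - 1) / real n * s\<^sup>2" .
  have "(tensor_inner n b S Y)\<^sup>2 \<le> tensor_inner n b S S * tensor_inner n b Y Y"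
    by (rule tensor_inner_Cauchy_Schwarz[OF b tensor_inner_nonneg[OF factor]])
  then show ?thesis unfolding SY YY by (simp add: mult_ac)
qed

section \<open>The Hamiltonian constraint\<close>

lemma st_C_simps [simp]:
  "st_C gam 0 x y = 0" "st_C gam e 0 y = 0" "st_C gam e x 0 = 0"
  "st_C gam (Suc e) (Suc x) (Suc y) = gam e x y"
  by (auto simp: st_C_def)

lemma st_g_simps [simp]:
  "st_g a t 0 0 = -1" "st_g a t 0 (Suc y) = 0" "st_g a t (Suc x) 0 = 0"
  "st_g a t (Suc x) (Suc y) = a t x y"
  by (auto simp: st_g_def)

lemma st_dg_simps [simp]:
  "st_dg a' t (Suc c) x y = 0" "st_dg a' t c 0 y = 0" "st_dg a' t c x 0 = 0"
  "st_dg a' t 0 (Suc x) (Suc y) = a' t x y"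
  by (auto simp: st_dg_def)

lemma st_ddg_simps [simp]:
  "st_ddg a'' t (Suc d) c x y = 0" "st_ddg a'' t d (Suc c) x y = 0"
  "st_ddg a'' t d c 0 y = 0" "st_ddg a'' t d c x 0 = 0"
  "st_ddg a'' t 0 0 (Suc x) (Suc y) = a'' t x y"
  by (auto simp: st_ddg_def)

abbreviation st_Gamma where
  "st_Gamma a a' gam t \<equiv> frame_Gamma 4 (st_g a t) (st_dg a' t) (st_C gam)"

lemma st_Gamma_simps:
  "st_Gamma a a' gam t 0 0 c = 0"
  "st_Gamma a a' gam t 0 (Suc i) 0 = 0"
  "st_Gamma a a' gam t 0 (Suc i) (Suc j) = a' t i j / 2"
  "st_Gamma a a' gam t (Suc i) 0 0 = 0"
  "st_Gamma a a' gam t (Suc i) 0 (Suc j) = a' t i j / 2"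
  "st_Gamma a a' gam t (Suc i) (Suc j) 0 = - a' t i j / 2"
  "st_Gamma a a' gam t (Suc i) (Suc j) (Suc k) = frame_Gamma 3 (a t) (\<lambda>_ _ _. 0) gam i j k"
  by (cases c) (simp_all add: frame_Gamma_def sum_4)

abbreviation st_Riem where
  "st_Riem a a' a'' gam t b \<equiv>
     frame_Riem 4 (st_g a t) (st_g (\<lambda>_. b) t) (st_dg a' t) (st_ddg a'' t) (st_C gam)"

lemma st_Riem_0000: "st_Riem a a' a'' gam t b 0 0 0 0 = 0"
  by (simp add: frame_Riem_def Let_def frame_dGamma_def sum_4 st_Gamma_simps sum_negf)

lemma st_Riem_i00j:
  "st_Riem a a' a'' gam t b (Suc i) 0 0 (Suc j) =
     - a'' t i j / 2 + (\<Sum>e<3. \<Sum>f<3. b e f * (a' t i e / 2 * (a' t j f / 2)))"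
  by (simp add: frame_Riem_def Let_def frame_dGamma_def sum_4 st_Gamma_simps sum_negf)

lemma st_Riem_0ij0:
  "st_Riem a a' a'' gam t b 0 (Suc i) (Suc j) 0 =
     - a'' t i j / 2 + (\<Sum>e<3. \<Sum>f<3. b e f * (a' t j e / 2 * (a' t i f / 2)))"
  by (simp add: frame_Riem_def Let_def frame_dGamma_def sum_4 st_Gamma_simps sum_negf)

text \<open>Gauss equation for the slices \<open>G \<times> {t}\<close>, whose second fundamental form is \<open>a' / 2\<close>.\<close>

lemma st_Riem_kijl:
  "st_Riem a a' a'' gam t b (Suc k) (Suc i) (Suc j) (Suc l) =
     frame_Riem 3 (a t) b (\<lambda>_ _ _. 0) (\<lambda>_ _ _ _. 0) gam k i j l
     + (a' t i j / 2 * (a' t k l / 2) - a' t k j / 2 * (a' t i l / 2))"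
  by (simp add: frame_Riem_def Let_def frame_dGamma_def sum_4 st_Gamma_simps algebra_simps)

lemma mat_inv_st_g:
  assumes "det3 (a t) \<noteq> 0"
  shows "mat_inv 4 (st_g a t) = st_g (\<lambda>_. mat_inv 3 (a t)) t"
proof (rule mat_inv_eqI[where C = "st_g (\<lambda>_. mat_inv 3 (a t)) t"])
  note inv3 = mat_inv_3_eq_inv3[OF assms]
  show "\<forall>i<4. \<forall>k<4. (\<Sum>j<4. st_g a t i j * st_g (\<lambda>_. mat_inv 3 (a t)) t j k) = (if i = k then 1 else 0)"
  proof (intro allI impI)
    fix i k :: nat assume "i < 4" "k < 4"
    then show "(\<Sum>j<4. st_g a t i j * st_g (\<lambda>_. mat_inv 3 (a t)) t j k) = (if i = k then 1 else 0)"
      using mult_inv3_right[OF assms] by (cases i; cases k) (simp_all add: sum_4 inv3)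
  qed
  show "\<forall>i<4. \<forall>k<4. (\<Sum>j<4. st_g (\<lambda>_. mat_inv 3 (a t)) t i j * st_g a t j k) = (if i = k then 1 else 0)"
  proof (intro allI impI)
    fix i k :: nat assume "i < 4" "k < 4"
    then show "(\<Sum>j<4. st_g (\<lambda>_. mat_inv 3 (a t)) t i j * st_g a t j k) = (if i = k then 1 else 0)"
      using mult_inv3_left[OF assms] by (cases i; cases k) (simp_all add: sum_4 inv3)
  qed
  show "\<forall>i j. \<not> (i < 4 \<and> j < 4) \<longrightarrow> st_g (\<lambda>_. mat_inv 3 (a t)) t i j = 0"
    by (auto simp: st_g_def inv3 inv3_def)
qed

lemma hamiltonian_constraint:
  assumes inv4: "mat_inv 4 (st_g a t) = st_g (\<lambda>_. mat_inv 3 (a t)) t"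
    and b_sym: "sym_mat 3 (mat_inv 3 (a t))" and a'_sym: "sym_mat 3 (a' t)"
  shows "rho a a' a'' gam \<Lambda> t = (Sbar a gam t + (theta a a' t)\<^sup>2
      - tensor_inner 3 (mat_inv 3 (a t)) (kbar a' t) (kbar a' t)) / 2 - \<Lambda>"
proof -
  define b where "b = mat_inv 3 (a t)"
  define ric_tt where "ric_tt = (\<Sum>k<3. \<Sum>l<3. b k l * st_Riem a a' a'' gam t b (Suc k) 0 0 (Suc l))"
  define scal_space where "scal_space = (\<Sum>i<3. \<Sum>j<3. b i j *
      (\<Sum>k<3. \<Sum>l<3. b k l * st_Riem a a' a'' gam t b (Suc k) (Suc i) (Suc j) (Suc l)))"
  have s: "b (Suc 0) 0 = b 0 (Suc 0)" "b 2 0 = b 0 2" "b 2 (Suc 0) = b (Suc 0) 2"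
    using b_sym by (auto simp: b_def sym_mat_def)
  have Ric00: "st_Ric a a' a'' gam t 0 0 = ric_tt"
    unfolding st_Ric_def inv4 frame_Ric_def ric_tt_def b_def by (simp add: sum_4 st_Riem_0000)
  have ric_tt_swap: "(\<Sum>i<3. \<Sum>j<3. b i j * st_Riem a a' a'' gam t b 0 (Suc i) (Suc j) 0) = ric_tt"
    unfolding ric_tt_def st_Riem_i00j st_Riem_0ij0 by (simp add: sum_3 s algebra_simps)
  have "st_Scal a a' a'' gam t = - ric_tt + (\<Sum>i<3. \<Sum>j<3. b i j *
      (- st_Riem a a' a'' gam t b 0 (Suc i) (Suc j) 0
       + (\<Sum>k<3. \<Sum>l<3. b k l * st_Riem a a' a'' gam t b (Suc k) (Suc i) (Suc j) (Suc l))))"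
    using Ric00 unfolding st_Scal_def st_Ric_def inv4 frame_Scal_def b_def
    by (simp add: sum_4 frame_Ric_def)
  also have "\<dots> = - ric_tt + (- ric_tt + scal_space)"
    unfolding scal_space_def ric_tt_swap[symmetric] by (simp add: algebra_simps sum.distrib sum_negf sum_subtractf)
  finally have Scal: "st_Scal a a' a'' gam t = - 2 * ric_tt + scal_space" by simp
  have rho: "rho a a' a'' gam \<Lambda> t = scal_space / 2 - \<Lambda>"
    unfolding rho_def st_T_def Ric00 Scal by (simp add: field_simps)
  have product: "(\<Sum>i<3::nat. \<Sum>j<3::nat. f i j) * (\<Sum>k<3::nat. \<Sum>l<3::nat. g k l)
      = (\<Sum>i<3. \<Sum>j<3. \<Sum>k<3. \<Sum>l<3. (f i j * g k l :: real))" for f g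
    unfolding sum_distrib_right unfolding sum_distrib_left by simp
  have "scal_space = Sbar a gam t + (theta a a' t)\<^sup>2
      - (\<Sum>i<3. \<Sum>j<3. \<Sum>k<3. \<Sum>l<3. b i j * b k l * (kbar a' t k j * kbar a' t i l))"
    unfolding scal_space_def st_Riem_kijl Sbar_def frame_Scal_def frame_Ric_def theta_def b_def[symmetric]
      power2_eq_square product kbar_def
    by (simp add: algebra_simps sum.distrib sum_subtractf sum_distrib_left)
  also have "(\<Sum>i<3. \<Sum>j<3. \<Sum>k<3. \<Sum>l<3. b i j * b k l * (kbar a' t k j * kbar a' t i l))
      = tensor_inner 3 b (kbar a' t) (kbar a' t)"
    using b_sym a'_sym by (intro tensor_inner_eq_contraction) (auto simp: b_def kbar_def sym_mat_def)
  finally show ?thesis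
    unfolding rho b_def by simp
qed

lemma hamiltonian_energy_bound:
  assumes "mat_inv 4 (st_g a t) = st_g (\<lambda>_. mat_inv 3 (a t)) t"
    and "sym_mat 3 (mat_inv 3 (a t))" "sym_mat 3 (a' t)"
    and "0 \<le> rho a a' a'' gam \<Lambda> t" "0 \<le> \<Lambda>"
  shows "tensor_inner 3 (mat_inv 3 (a t)) (kbar a' t) (kbar a' t) \<le> max (Sbar a gam t) 0 + (theta a a' t)\<^sup>2"
  using hamiltonian_constraint[of a t a' a'' gam \<Lambda>, OF assms(1-3)] assms(4,5)
    max.cobounded1[of "Sbar a gam t" 0]
  by argo

section \<open>Bounding the shear\<close>

lemma sym_mat_derivative:
  assumes I: "open I" "t \<in> I" and sym: "\<And>s. s \<in> I \<Longrightarrow> sym_mat n (a s)"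
    and deriv: "\<And>i j. i < n \<Longrightarrow> j < n \<Longrightarrow> ((\<lambda>s. a s i j) has_real_derivative a' i j) (at t)"
  shows "sym_mat n a'"
  unfolding sym_mat_def
proof (intro allI impI)
  fix i j assume ij: "i < n" "j < n"
  have "((\<lambda>s. a s j i) has_real_derivative a' i j) (at t)"
    by (rule has_field_derivative_transform_within_open[OF deriv[OF ij] I])
      (use sym ij in \<open>auto simp: sym_mat_def\<close>)
  then show "a' i j = a' j i"
    using deriv[OF ij(2,1)] by (rule DERIV_unique)
qed

lemma shear_traceless:
  assumes A: "sym_mat 3 A" and inv: "\<forall>i<3. \<forall>k<3. (\<Sum>j<3. b i j * A j k) = (if i = k then 1 else 0)"
    and th: "th = (\<Sum>i<3. \<Sum>k<3. b i k * K i k)" "th \<noteq> 0"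
  shows "(\<Sum>i<3. \<Sum>k<3. b i k * ((K i k - th / 3 * A i k) / th)) = 0"
proof -
  have "b i k * ((K i k - th / 3 * A i k) / th) = b i k * K i k / th - b i k * A i k / 3" for i k
    using th(2) by (simp add: field_simps)
  then have "(\<Sum>i<3. \<Sum>k<3. b i k * ((K i k - th / 3 * A i k) / th))
      = (\<Sum>i<3. \<Sum>k<3. b i k * K i k) / th - (\<Sum>i<3. \<Sum>k<3. b i k * A i k) / 3"
    by (simp add: sum_subtractf sum_divide_distrib)
  then show ?thesis
    using trace_mult_inverse[OF A inv] th by simp
qed

lemma tensor_inner_shear:
  assumes b: "sym_mat 3 b" and A: "sym_mat 3 A"
    and inv: "\<forall>i<3. \<forall>k<3. (\<Sum>j<3. b i j * A j k) = (if i = k then 1 else 0)"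
    and th: "th = (\<Sum>i<3. \<Sum>k<3. b i k * K i k)" "th \<noteq> 0"
  defines "S \<equiv> \<lambda>i j. (K i j - th / 3 * A i j) / th"
  shows "tensor_inner 3 b S S = tensor_inner 3 b K K / th\<^sup>2 - 1 / 3"
proof -
  have S: "S = (\<lambda>i j. (1 / th) * K i j + (- 1 / 3) * A i j)"
    using th by (auto simp: S_def field_simps)
  have lin: "tensor_inner 3 b S W = tensor_inner 3 b K W / th - tensor_inner 3 b A W / 3" for W
    unfolding S tensor_inner_linear by simp
  have KA: "tensor_inner 3 b K A = th" and AA: "tensor_inner 3 b A A = 3"
    using tensor_inner_metric[OF A inv] trace_mult_inverse[OF A inv] th by simp_all
  have "tensor_inner 3 b S S = tensor_inner 3 b S K / th - tensor_inner 3 b S A / 3"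
    using lin[of S] by (metis tensor_inner_commute[OF b])
  also have "\<dots> = tensor_inner 3 b K K / th\<^sup>2 - 1 / 3"
    using th tensor_inner_commute[OF b, of A K]
    by (simp add: lin KA AA field_simps power2_eq_square)
  finally show ?thesis .
qed

lemma shear_quadratic_form:
  fixes b S :: "nat \<Rightarrow> nat \<Rightarrow> real" and v :: "nat \<Rightarrow> real"
  assumes "sym_mat 3 b"
  defines "w i \<equiv> \<Sum>k<3. b i k * v k"
  shows "(\<Sum>i<3. \<Sum>m<3. \<Sum>j<3. (2 * (if i = m then 1 else 0) - 3 * (\<Sum>l<3. b i l * S l m))
            * b m j * v i * v j)
         = 2 * (\<Sum>i<3. \<Sum>k<3. b i k * v i * v k) - 3 * (\<Sum>i<3. \<Sum>j<3. S i j * w i * w j)"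
proof -
  have s: "b (Suc 0) 0 = b 0 (Suc 0)" "b 2 0 = b 0 2" "b 2 (Suc 0) = b (Suc 0) 2"
    using assms by (auto simp: sym_mat_def)
  show ?thesis
    unfolding w_def by (simp add: sum_3 s algebra_simps)
qed

lemma shear_eigenvalue_bound:
  fixes s q T \<sigma> :: real
  assumes s: "0 \<le> s" and \<sigma>: "0 \<le> \<sigma>" and T: "T \<le> \<sigma> + 2 / 3" and q: "q\<^sup>2 \<le> 2 / 3 * s\<^sup>2 * T"
  shows "- (3 / 2) * \<sigma> * s \<le> 2 * s - 3 * q"
proof -
  have "2 / 3 * s\<^sup>2 * T \<le> 2 / 3 * s\<^sup>2 * (\<sigma> + 2 / 3)"
    by (rule mult_left_mono[OF T]) simp
  moreover have "(s * (2 / 3 + \<sigma> / 2))\<^sup>2 = 2 / 3 * s\<^sup>2 * (\<sigma> + 2 / 3) + (s * \<sigma>)\<^sup>2 / 4"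
    by (simp add: power2_eq_square algebra_simps)
  moreover have "0 \<le> (s * \<sigma>)\<^sup>2" by simp
  ultimately have "q\<^sup>2 \<le> (s * (2 / 3 + \<sigma> / 2))\<^sup>2"
    using q by linarith
  then have "q \<le> s * (2 / 3 + \<sigma> / 2)"
    by (rule power2_le_imp_le) (use s \<sigma> in simp)
  moreover have "s * (2 / 3 + \<sigma> / 2) = 2 / 3 * s + (\<sigma> * s) / 2"
    "- (3 / 2) * \<sigma> * s = - (3 / 2) * (\<sigma> * s)"
    by (simp_all add: algebra_simps)
  ultimately show ?thesis
    by linarith
qed

lemma shear_form_lower_bound:
  fixes A K :: "nat \<Rightarrow> nat \<Rightarrow> real" and v :: "nat \<Rightarrow> real"
  assumes A: "sym_mat 3 A" "posdef_mat 3 A"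
    and th: "th = (\<Sum>i<3. \<Sum>k<3. mat_inv 3 A i k * K i k)" "th \<noteq> 0"
    and energy: "tensor_inner 3 (mat_inv 3 A) K K \<le> R + th\<^sup>2" and R: "0 \<le> R"
  defines "b \<equiv> mat_inv 3 A"
  shows "(\<Sum>i<3. \<Sum>m<3. \<Sum>j<3.
            (2 * (if i = m then 1 else 0) - 3 * (\<Sum>l<3. b i l * ((K l m - th / 3 * A l m) / th)))
              * b m j * v i * v j)
         \<ge> - (3 / 2) * (R / th\<^sup>2) * (\<Sum>i<3. \<Sum>j<3. b i j * v i * v j)"
proof -
  define S where "S = (\<lambda>i j. (K i j - th / 3 * A i j) / th)"
  define w where "w i = (\<Sum>k<3. b i k * v k)" for i
  define s where "s = (\<Sum>i<3. \<Sum>k<3. b i k * v i * v k)"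
  have det: "det3 A \<noteq> 0" using posdef3_leading_minors[OF A] by simp
  have b_inv3: "b = inv3 A" unfolding b_def by (rule mat_inv_3_eq_inv3[OF det])
  have b: "sym_mat 3 b" "posdef_mat 3 b"
    unfolding b_inv3 using sym_mat_inv3[OF A(1)] posdef_mat_inv3[OF A] by simp_all
  have inv: "\<forall>i<3. \<forall>k<3. (\<Sum>j<3. b i j * A j k) = (if i = k then 1 else 0)"
    unfolding b_inv3 using mult_inv3_left[OF det] by simp
  obtain L :: "nat \<Rightarrow> nat \<Rightarrow> real" where factor: "\<forall>i<3. \<forall>j<3. b i j = (\<Sum>p<3. L i p * L j p)"
    by (rule cholesky3[OF b])
  have "0 < th\<^sup>2" using th(2) by simp
  then have "tensor_inner 3 b K K / th\<^sup>2 \<le> R / th\<^sup>2 + 1"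
    using energy by (simp add: b_def pos_divide_le_eq algebra_simps)
  then have T: "tensor_inner 3 b S S \<le> R / th\<^sup>2 + 2 / 3"
    unfolding S_def tensor_inner_shear[OF b(1) A(1) inv th[folded b_def]] by simp
  have q: "(\<Sum>i<3. \<Sum>j<3. S i j * w i * w j)\<^sup>2 \<le> 2 / 3 * s\<^sup>2 * tensor_inner 3 b S S"
    using traceless_tensor_bound[of 3 b L A S v] factor A(1) inv
      shear_traceless[OF A(1) inv th[folded b_def]]
    by (simp add: S_def w_def s_def)
  have s: "0 \<le> s"
    unfolding s_def quadratic_form_factor[OF factor] by (simp add: sum_nonneg)
  have "(\<Sum>i<3. \<Sum>m<3. \<Sum>j<3.
            (2 * (if i = m then 1 else 0) - 3 * (\<Sum>l<3. b i l * ((K l m - th / 3 * A l m) / th)))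
              * b m j * v i * v j)
      = 2 * s - 3 * (\<Sum>i<3. \<Sum>j<3. S i j * w i * w j)"
    using shear_quadratic_form[OF b(1), of S v] by (simp add: S_def w_def s_def)
  with shear_eigenvalue_bound[OF s _ T q] R show ?thesis
    by (simp add: s_def)
qed

theorem mainTheorem8:
  fixes I :: "real set"
    and a a' a'' :: "real \<Rightarrow> nat \<Rightarrow> nat \<Rightarrow> real"
    and gam :: "nat \<Rightarrow> nat \<Rightarrow> nat \<Rightarrow> real"
    and \<Lambda> :: real
  assumes I: "connected I" "open I" "I \<noteq> {}"
    and lie: "lie_structure_constants gam"
    and sym: "\<And>t i j. t \<in> I \<Longrightarrow> i < 3 \<Longrightarrow> j < 3 \<Longrightarrow> a t i j = a t j i"
    and posdef: "\<And>t (w :: nat \<Rightarrow> real). t \<in> I \<Longrightarrow> (\<exists>i<3. w i \<noteq> 0) \<Longrightarrow>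
                   (\<Sum>i<3. \<Sum>j<3. a t i j * w i * w j) > 0"
    and da: "\<And>t i j. t \<in> I \<Longrightarrow> i < 3 \<Longrightarrow> j < 3 \<Longrightarrow>
               ((\<lambda>s. a s i j) has_real_derivative a' t i j) (at t)"
    and dda: "\<And>t i j. t \<in> I \<Longrightarrow> i < 3 \<Longrightarrow> j < 3 \<Longrightarrow>
               ((\<lambda>s. a' s i j) has_real_derivative a'' t i j) (at t)"
    and rho_nonneg: "\<And>t. t \<in> I \<Longrightarrow> rho a a' a'' gam \<Lambda> t \<ge> 0"
    and Lambda_nonneg: "\<Lambda> \<ge> 0"
  shows "\<forall>(v :: nat \<Rightarrow> real). \<forall>t\<in>I. theta a a' t \<noteq> 0 \<longrightarrow>
           (\<Sum>i<3. \<Sum>m<3. \<Sum>j<3.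
              (2 * (if i = m then 1 else 0) - 3 * Sigma_mixed a a' t i m)
                * mat_inv 3 (a t) m j * v i * v j)
           \<ge> - (3 / 2) * (max (Sbar a gam t) 0 / (theta a a' t)\<^sup>2)
                * (\<Sum>i<3. \<Sum>j<3. mat_inv 3 (a t) i j * v i * v j)"
proof (intro allI ballI impI)
  fix v :: "nat \<Rightarrow> real" and t assume t: "t \<in> I" and th: "theta a a' t \<noteq> 0"
  have a: "sym_mat 3 (a s)" if "s \<in> I" for s
    using sym[OF that] by (simp add: sym_mat_def)
  have A: "sym_mat 3 (a t)" "posdef_mat 3 (a t)"
    using a[OF t] posdef[OF t] by (auto simp: posdef_mat_def)
  have det: "det3 (a t) \<noteq> 0"
    using posdef3_leading_minors[OF A] by simp
  have a': "sym_mat 3 (a' t)"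
    by (rule sym_mat_derivative[OF I(2) t a da[OF t]])
  have b: "sym_mat 3 (mat_inv 3 (a t))"
    unfolding mat_inv_3_eq_inv3[OF det] by (rule sym_mat_inv3[OF A(1)])
  have "tensor_inner 3 (mat_inv 3 (a t)) (kbar a' t) (kbar a' t) \<le> max (Sbar a gam t) 0 + (theta a a' t)\<^sup>2"
    using mat_inv_st_g[of a t, OF det] b a' rho_nonneg[OF t] Lambda_nonneg
    by (rule hamiltonian_energy_bound)
  from shear_form_lower_bound[OF A theta_def th this max.cobounded2, of v]
  show "(\<Sum>i<3. \<Sum>m<3. \<Sum>j<3.
          (2 * (if i = m then 1 else 0) - 3 * Sigma_mixed a a' t i m) * mat_inv 3 (a t) m j * v i * v j)
        \<ge> - (3 / 2) * (max (Sbar a gam t) 0 / (theta a a' t)\<^sup>2)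
          * (\<Sum>i<3. \<Sum>j<3. mat_inv 3 (a t) i j * v i * v j)"
    unfolding Sigma_mixed_def Sigma_low_def sigmabar_def .
qed

end
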